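(* Let $G$ be a reaction network with one-dimensional stoichiometric subspace. If for a rate-constant vector $\kappa^*$ and a total-constant vector $c^*$, $G$ has exactly $N$ positive steady states $x^{(1)},\dots,x^{(N)}$ in $\mathcal P_{c^*}$ with $x^{(1)}_1<\dots<x^{(N)}_1$, then (a) for any $1\le i\le N-1$, $x^{(i)}$ and $x^{(i+1)}$ are not both stable, and (b) at most $\lceil N/2\rceil$ of these positive steady states are stable.
   Context: A reaction network $G$ has species $X_1,\dots,X_s$ and $m$ reactions $\sum_{i}\alpha_{ij}X_i\to\sum_i\beta_{ij}X_i$, $\alpha_{ij},\beta_{ij}\in\mathbb Z_{\ge0}$, $(\alpha_{1j},\dots,\alpha_{sj})\neq(\beta_{1j},\dots,\beta_{sj})$. $\mathcal N$ has entries $\beta_{ij}-\alpha_{ij}$, $S=\mathrm{im}\,\mathcal N$. For $\kappa\in\mathbb R^m_{>0}$, $f(\kappa;x)=\mathcal N(\kappa_1\prod_i x_i^{\alpha_{i1}},\dots,\kappa_m\prod_i x_i^{\alpha_{im}})^\top$. Since $S$ is one-dimensional, species are labelled so that $\beta_{11}-\alpha_{11}\ne0$, and for $c\in\mathbb R^{s-1}$, $\mathcal P_c=\{x\in\mathbb R^s_{\ge0}:(\beta_{i1}-\alpha_{i1})x_1-(\beta_{11}-\alpha_{11})x_i=c_{i-1},\ i=2,\dots,s\}$. A steady state is $x\ge0$ with $f(\kappa;x)=0$; positive if $x\in\mathbb R^s_{>0}$; nondegenerate if $\mathrm{Jac}_f(x)(S)=S$; stable if nondegenerate and all nonzero eigenvalues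 of $\mathrm{Jac}_f(x)$ have negative real parts. *)

theory Defs
  imports "HOL-Analysis.Analysis"
begin

text \<open>A reaction network with species indexed by the finite type 's and reactions
indexed by the finite type 'r. alpha i j and beta i j are the stoichiometric
coefficients of species i in the reactant/product complex of reaction j.\<close>

definition stoich_matrix :: "('s::finite \<Rightarrow> 'r::finite \<Rightarrow> nat) \<Rightarrow> ('s \<Rightarrow> 'r \<Rightarrow> nat) \<Rightarrow> real^'r^'s" where
  "stoich_matrix alpha beta = (\<chi> i j. real (beta i j) - real (alpha i j))"

definition stoich_space :: "('s::finite \<Rightarrow> 'r::finite \<Rightarrow> nat) \<Rightarrow> ('s \<Rightarrow> 'r \<Rightarrow> nat) \<Rightarrow> (real^'s) set" where
  "stoich_space alpha beta = range (\<lambda>y. stoich_matrix alpha beta *v y)"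

definition valid_network :: "('s::finite \<Rightarrow> 'r::finite \<Rightarrow> nat) \<Rightarrow> ('s \<Rightarrow> 'r \<Rightarrow> nat) \<Rightarrow> bool" where
  "valid_network alpha beta \<longleftrightarrow> (\<forall>j. \<exists>i. alpha i j \<noteq> beta i j)"

definition mass_action :: "('s::finite \<Rightarrow> 'r::finite \<Rightarrow> nat) \<Rightarrow> ('s \<Rightarrow> 'r \<Rightarrow> nat) \<Rightarrow> real^'r \<Rightarrow> real^'s \<Rightarrow> real^'s" where
  "mass_action alpha beta \<kappa> x =
     stoich_matrix alpha beta *v (\<chi> j. \<kappa>$j * (\<Prod>i\<in>UNIV. (x$i) ^ alpha i j))"

definition jacobian :: "('s::finite \<Rightarrow> 'r::finite \<Rightarrow> nat) \<Rightarrow> ('s \<Rightarrow> 'r \<Rightarrow> nat) \<Rightarrow> real^'r \<Rightarrow> real^'s \<Rightarrow> real^'s^'s" where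
  "jacobian alpha beta \<kappa> x =
     (\<chi> i l. deriv (\<lambda>t. mass_action alpha beta \<kappa> (\<chi> k. if k = l then t else x$k) $ i) (x$l))"

definition steady_state :: "('s::finite \<Rightarrow> 'r::finite \<Rightarrow> nat) \<Rightarrow> ('s \<Rightarrow> 'r \<Rightarrow> nat) \<Rightarrow> real^'r \<Rightarrow> real^'s \<Rightarrow> bool" where
  "steady_state alpha beta \<kappa> x \<longleftrightarrow> (\<forall>i. x$i \<ge> 0) \<and> mass_action alpha beta \<kappa> x = 0"

definition positive_steady_state :: "('s::finite \<Rightarrow> 'r::finite \<Rightarrow> nat) \<Rightarrow> ('s \<Rightarrow> 'r \<Rightarrow> nat) \<Rightarrow> real^'r \<Rightarrow> real^'s \<Rightarrow> bool" where
  "positive_steady_state alpha beta \<kappa> x \<longleftrightarrow> steady_state alpha beta \<kappa> x \<and> (\<forall>i. x$i > 0)"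

definition nondegenerate :: "('s::finite \<Rightarrow> 'r::finite \<Rightarrow> nat) \<Rightarrow> ('s \<Rightarrow> 'r \<Rightarrow> nat) \<Rightarrow> real^'r \<Rightarrow> real^'s \<Rightarrow> bool" where
  "nondegenerate alpha beta \<kappa> x \<longleftrightarrow>
     steady_state alpha beta \<kappa> x \<and>
     (\<lambda>v. jacobian alpha beta \<kappa> x *v v) ` stoich_space alpha beta = stoich_space alpha beta"

definition is_eigenvalue :: "real^'n^'n \<Rightarrow> complex \<Rightarrow> bool" where
  "is_eigenvalue A \<mu> \<longleftrightarrow>
     (\<exists>v::complex^'n. v \<noteq> 0 \<and> (\<chi> i j. complex_of_real (A$i$j)) *v v = \<mu> *s v)"

definition stable_steady_state :: "('s::finite \<Rightarrow> 'r::finite \<Rightarrow> nat) \<Rightarrow> ('s \<Rightarrow> 'r \<Rightarrow> nat) \<Rightarrow> real^'r \<Rightarrow> real^'s \<Rightarrow> bool" where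
  "stable_steady_state alpha beta \<kappa> x \<longleftrightarrow>
     nondegenerate alpha beta \<kappa> x \<and>
     (\<forall>\<mu>. is_eigenvalue (jacobian alpha beta \<kappa> x) \<mu> \<and> \<mu> \<noteq> 0 \<longrightarrow> Re \<mu> < 0)"

text \<open>Species a plays the role of X_1 and
reaction r1 the role of the first reaction, with N_{a,r1} \<noteq> 0; c is indexed by
the remaining species (its value at a is irrelevant).\<close>
definition compat_class :: "('s::finite \<Rightarrow> 'r::finite \<Rightarrow> nat) \<Rightarrow> ('s \<Rightarrow> 'r \<Rightarrow> nat) \<Rightarrow> 's \<Rightarrow> 'r \<Rightarrow> ('s \<Rightarrow> real) \<Rightarrow> (real^'s) set" where
  "compat_class alpha beta a r1 c =
     {x. (\<forall>i. x$i \<ge> 0) \<and>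
         (\<forall>i. i \<noteq> a \<longrightarrow>
            stoich_matrix alpha beta $ i $ r1 * x$a - stoich_matrix alpha beta $ a $ r1 * x$i = c i)}"

end

theory Submission
  imports Defs
begin

text \<open>
  Since the stoichiometric subspace is a line spanned by some \<open>d\<close>, the mass-action
  field factors as \<open>f(x) = h(x) d\<close> with \<open>h\<close> a polynomial, and the compatibility class
  lies on a line parallel to \<open>d\<close>. The Jacobian maps every \<open>u\<close> to \<open>(Dh(x) u) d\<close>,
  so its only possibly nonzero eigenvalue is \<open>Dh(x) d\<close>, which nondegeneracy forces
  to be nonzero: at a stable steady state \<open>h\<close> is strictly decreasing in direction \<open>d\<close>.
  Two zeros of \<open>h\<close> on the line at which \<open>h\<close> decreases enclose a third zero by the
  intermediate value theorem, i.e. a further positive steady state of the class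
  strictly between them. Hence no two consecutive steady states are both stable,
  and a subset of \<open>{1..N}\<close> without two consecutive elements has at most \<open>\<lceil>N/2\<rceil>\<close>
  elements.
\<close>

lemma subspace_eq_line_if_dim_1:
  fixes S :: "'a::euclidean_space set"
  assumes "subspace S" and "dim S = 1" and "w \<in> S" and "w \<noteq> 0"
  shows "S = range (\<lambda>t. t *\<^sub>R w)"
proof -
  have "span {w} = span S"
    by (rule dim_eq_span) (use assms in auto)
  moreover have "span S = S"
    using assms(1) by simp
  ultimately show ?thesis
    by (simp add: span_singleton)
qed

lemma is_eigenvalue_of_real:
  assumes "A *v v = \<mu> *\<^sub>R v" and "v \<noteq> 0"
  shows "is_eigenvalue A (complex_of_real \<mu>)"
  unfolding is_eigenvalue_def
proof (intro exI conjI)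
  let ?v = "\<chi> i. complex_of_real (v $ i)"
  show "?v \<noteq> 0" using assms(2) by (auto simp: vec_eq_iff)
  have "(\<chi> i j. complex_of_real (A$i$j)) *v ?v = (\<chi> i. complex_of_real ((A *v v) $ i))"
    by (simp add: matrix_vector_mult_def vec_eq_iff)
  then show "(\<chi> i j. complex_of_real (A$i$j)) *v ?v = complex_of_real \<mu> *s ?v"
    by (simp add: assms(1) vec_eq_iff)
qed

lemma has_real_derivative_along_line:
  fixes g :: "'a::real_normed_vector \<Rightarrow> real"
  assumes "(g has_derivative G) (at (x + t *\<^sub>R d))"
  shows "((\<lambda>s. g (x + s *\<^sub>R d)) has_real_derivative G d) (at t)"
proof -
  have "((\<lambda>s. x + s *\<^sub>R d) has_derivative (\<lambda>s. s *\<^sub>R d)) (at t)"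
    by (auto intro!: derivative_eq_intros)
  from has_derivative_compose[OF this assms]
  have "((\<lambda>s. g (x + s *\<^sub>R d)) has_derivative (\<lambda>s. G (s *\<^sub>R d))) (at t)"
    by (simp add: o_def)
  moreover have "(\<lambda>s. G (s *\<^sub>R d)) = (*) (G d)"
    using linear_scale[OF has_derivative_linear[OF assms]] by (auto simp: fun_eq_iff)
  ultimately show ?thesis
    by (simp add: has_field_derivative_def)
qed

lemma has_real_derivative_along_coordinate:
  fixes g :: "real^'n \<Rightarrow> real"
  assumes "(g has_derivative G) (at x)"
  shows "((\<lambda>t. g (\<chi> k. if k = l then t else x$k)) has_real_derivative G (axis l 1)) (at (x$l))"
proof -
  let ?x0 = "x - (x$l) *\<^sub>R axis l 1"
  have line: "(\<chi> k. if k = l then t else x$k) = ?x0 + t *\<^sub>R axis l 1" for t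
    by (auto simp: vec_eq_iff axis_def)
  have "?x0 + (x$l) *\<^sub>R axis l 1 = x" by simp
  with assms show ?thesis
    unfolding line by (intro has_real_derivative_along_line) simp
qed

lemma zero_between_zeros_with_negative_slopes:
  fixes f :: "real \<Rightarrow> real"
  assumes "a < b" and "f a = 0" and "f b = 0"
    and "(f has_real_derivative f'a) (at a)" and "f'a < 0"
    and "(f has_real_derivative f'b) (at b)" and "f'b < 0"
    and "continuous_on {a..b} f"
  obtains r where "a < r" and "r < b" and "f r = 0"
proof -
  obtain ea where "ea > 0" and ea: "\<And>h. 0 < h \<Longrightarrow> h < ea \<Longrightarrow> f (a + h) < f a"
    using DERIV_neg_dec_right[OF assms(4,5)] by blast
  obtain eb where "eb > 0" and eb: "\<And>h. 0 < h \<Longrightarrow> h < eb \<Longrightarrow> f b < f (b - h)"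
    using DERIV_neg_dec_left[OF assms(6,7)] by blast
  define h where "h = min (min ea eb) (b - a) / 2"
  have "0 < h" "h < ea" "h < eb" "2 * h \<le> b - a"
    using \<open>ea > 0\<close> \<open>eb > 0\<close> \<open>a < b\<close> by (auto simp: h_def)
  then have "f (a + h) \<le> 0" "0 \<le> f (b - h)" "a + h \<le> b - h"
    using ea eb assms(2,3) by (auto intro: less_imp_le)
  moreover have "continuous_on {a + h..b - h} f"
    by (rule continuous_on_subset[OF assms(8)]) (use \<open>0 < h\<close> in auto)
  ultimately obtain r where "a + h \<le> r" "r \<le> b - h" "f r = 0"
    using IVT'[of f "a + h" 0 "b - h"] by blast
  with \<open>0 < h\<close> show thesis
    by (intro that) auto
qed

lemma strict_mono_on_atLeastAtMost_if_Suc: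
  fixes f :: "nat \<Rightarrow> 'a::order"
  assumes "\<And>i. m \<le> i \<Longrightarrow> i < n \<Longrightarrow> f i < f (Suc i)"
  shows "strict_mono_on {m..n} f"
proof (rule strict_mono_onI)
  fix i j assume "i \<in> {m..n}" "j \<in> {m..n}" "i < j"
  have "m \<le> i \<longrightarrow> j \<le> n \<longrightarrow> f i < f j"
    using \<open>i < j\<close>
    by (induction rule: less_Suc_induct) (use assms in \<open>auto dest: order.strict_trans\<close>)
  then show "f i < f j"
    using \<open>i \<in> {m..n}\<close> \<open>j \<in> {m..n}\<close> by simp
qed

lemma card_le_ceiling_half_if_no_consecutive:
  fixes A :: "nat set"
  assumes "A \<subseteq> {1..n}" and "\<And>i. i \<in> A \<Longrightarrow> Suc i \<notin> A"
  shows "card A \<le> nat \<lceil>real n / 2\<rceil>"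
proof -
  have "inj_on (\<lambda>i. (i + 1) div 2) A"
  proof (rule inj_onI)
    fix i j assume "i \<in> A" "j \<in> A" "(i + 1) div 2 = (j + 1) div 2"
    moreover from \<open>(i + 1) div 2 = (j + 1) div 2\<close> have "i = j \<or> j = Suc i \<or> i = Suc j"
      by presburger
    ultimately show "i = j"
      using assms(2) by blast
  qed
  moreover have "(i + 1) div 2 \<in> {1..(n + 1) div 2}" if "i \<in> A" for i
    using subsetD[OF assms(1) that] div_le_mono[of 2 "i + 1" 2] div_le_mono[of "i + 1" "n + 1" 2]
    by auto
  then have "(\<lambda>i. (i + 1) div 2) ` A \<subseteq> {1..(n + 1) div 2}"
    by auto
  ultimately have "card A \<le> card {1..(n + 1) div 2}"
    by (rule card_inj_on_le) simp
  also have "\<dots> = nat \<lceil>real n / 2\<rceil>"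
  proof -
    have "\<lceil>real n / 2\<rceil> = - (- int n div 2)"
      using ceiling_divide_eq_div[of "int n" 2] by simp
    also have "\<dots> = int ((n + 1) div 2)"
      by presburger
    finally show ?thesis
      by simp
  qed
  finally show ?thesis .
qed

lemma subspace_stoich_space: "subspace (stoich_space alpha beta)"
  unfolding stoich_space_def by (rule linear_subspace_image) (auto intro: subspace_UNIV)

lemma column_in_stoich_space: "column j (stoich_matrix alpha beta) \<in> stoich_space alpha beta"
  unfolding stoich_space_def by (metis matrix_vector_mult_basis rangeI)

lemma mass_action_along_line:
  assumes "stoich_space alpha beta = range (\<lambda>t. t *\<^sub>R w)"
  obtains h where "\<And>x. mass_action alpha beta \<kappa> x = h x *\<^sub>R w"
    and "\<And>x. h differentiable (at x)"
proof -
  have "\<forall>j. \<exists>l. column j (stoich_matrix alpha beta) = l *\<^sub>R w"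
    using column_in_stoich_space assms by blast
  then obtain lam where lam: "\<And>j. column j (stoich_matrix alpha beta) = lam j *\<^sub>R w"
    by metis
  define h where "h x = (\<Sum>j\<in>UNIV. lam j * (\<kappa>$j * (\<Prod>i\<in>UNIV. (x$i) ^ alpha i j)))" for x
  show thesis
  proof
    fix x
    have "stoich_matrix alpha beta $ i $ j = lam j * w $ i" for i j
      using lam[of j] by (simp add: column_def vec_eq_iff)
    then show "mass_action alpha beta \<kappa> x = h x *\<^sub>R w"
      by (simp add: mass_action_def h_def matrix_vector_mult_def vec_eq_iff sum_distrib_left mult_ac)
    have coordinate: "((\<lambda>x. x $ i) has_derivative (\<lambda>u. u $ i)) (at x)" for i
      by (simp add: bounded_linear_imp_has_derivative bounded_linear_vec_nth)
    show "h differentiable (at x)"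
      unfolding h_def differentiable_def by (rule exI) (rule derivative_intros coordinate)+
  qed
qed

lemma jacobian_of_field_along_line:
  assumes field: "\<And>y. mass_action alpha beta \<kappa> y = h y *\<^sub>R w"
    and h: "(h has_derivative H) (at x)"
  shows "jacobian alpha beta \<kappa> x *v u = H u *\<^sub>R w"
proof -
  have lin: "linear H"
    using h has_derivative_linear by blast
  have entry: "jacobian alpha beta \<kappa> x $ i $ l = w $ i * H (axis l 1)" for i l
  proof -
    have "((\<lambda>t. h (\<chi> k. if k = l then t else x$k) * w $ i) has_real_derivative H (axis l 1) * w $ i)
        (at (x$l))"
      by (intro DERIV_cmult_right has_real_derivative_along_coordinate h)
    then show ?thesis
      by (simp add: jacobian_def field DERIV_imp_deriv mult.commute)
  qed
  have "H u = H (\<Sum>l\<in>UNIV. u $ l *\<^sub>R axis l 1)"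
    using basis_expansion[of u] by (simp add: scalar_mult_eq_scaleR)
  also have "\<dots> = (\<Sum>l\<in>UNIV. u $ l * H (axis l 1))"
    by (simp add: linear_sum[OF lin] linear_scale[OF lin])
  finally show ?thesis
    by (simp add: vec_eq_iff matrix_vector_mult_def entry sum_distrib_left mult_ac)
qed

lemma stable_imp_derivative_along_line_neg:
  assumes S: "stoich_space alpha beta = range (\<lambda>t. t *\<^sub>R w)" and "w \<noteq> 0"
    and field: "\<And>y. mass_action alpha beta \<kappa> y = h y *\<^sub>R w"
    and h: "(h has_derivative H) (at x)"
    and stable: "stable_steady_state alpha beta \<kappa> x"
  shows "H w < 0"
proof -
  let ?J = "jacobian alpha beta \<kappa> x"
  have J: "?J *v u = H u *\<^sub>R w" for u
    using jacobian_of_field_along_line[OF field h] .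
  have "w \<in> stoich_space alpha beta"
    using S by (metis rangeI scaleR_one)
  then have "w \<in> (\<lambda>u. ?J *v u) ` stoich_space alpha beta"
    using stable by (simp add: stable_steady_state_def nondegenerate_def)
  then obtain u where "u \<in> stoich_space alpha beta" and "w = ?J *v u"
    by blast
  then obtain t where u: "u = t *\<^sub>R w"
    using S by blast
  have "w = ?J *v u" by fact
  also have "\<dots> = H u *\<^sub>R w"
    by (rule J)
  also have "H u = t * H w"
    using u linear_scale[OF has_derivative_linear[OF h]] by simp
  finally have "H w \<noteq> 0"
    using \<open>w \<noteq> 0\<close> by (metis mult_zero_right scale_zero_left)
  have "\<And>\<mu>. is_eigenvalue ?J \<mu> \<Longrightarrow> \<mu> \<noteq> 0 \<Longrightarrow> Re \<mu> < 0"
    using stable unfolding stable_steady_state_def by blast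
  from this[OF is_eigenvalue_of_real[OF J \<open>w \<noteq> 0\<close>]] show ?thesis
    using \<open>H w \<noteq> 0\<close> by simp
qed

lemma compat_class_diff_eq_scaled_column:
  assumes "x \<in> compat_class alpha beta a r1 c" and "y \<in> compat_class alpha beta a r1 c"
    and "stoich_matrix alpha beta $ a $ r1 \<noteq> 0"
  shows "y - x =
    ((y$a - x$a) / stoich_matrix alpha beta $ a $ r1) *\<^sub>R column r1 (stoich_matrix alpha beta)"
  unfolding vec_eq_iff
proof
  fix k
  let ?N = "stoich_matrix alpha beta"
  show "(y - x) $ k = (((y$a - x$a) / ?N $ a $ r1) *\<^sub>R column r1 ?N) $ k"
  proof (cases "k = a")
    case False
    with assms(1,2)
    have "?N $ k $ r1 * x $ a - ?N $ a $ r1 * x $ k = ?N $ k $ r1 * y $ a - ?N $ a $ r1 * y $ k"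
      by (simp add: compat_class_def)
    then have "?N $ a $ r1 * (y - x) $ k = ?N $ k $ r1 * (y$a - x$a)"
      by (simp add: right_diff_distrib)
    then show ?thesis
      using assms(3) by (simp add: column_def nonzero_eq_divide_eq mult.commute)
  qed (use assms(3) in \<open>simp add: column_def\<close>)
qed

lemma convex_compat_class:
  fixes alpha beta :: "'s::finite \<Rightarrow> 'r::finite \<Rightarrow> nat"
  shows "convex (compat_class alpha beta a r1 c)"
proof (rule convexI)
  fix x y :: "real^'s" and u v :: real
  assume "x \<in> compat_class alpha beta a r1 c" "y \<in> compat_class alpha beta a r1 c"
    and "0 \<le> u" "0 \<le> v" "u + v = 1"
  let ?N = "stoich_matrix alpha beta" and ?z = "u *\<^sub>R x + v *\<^sub>R y"
  have x: "0 \<le> x $ i" "i \<noteq> a \<Longrightarrow> ?N $ i $ r1 * x $ a - ?N $ a $ r1 * x $ i = c i" for i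
    using \<open>x \<in> _\<close> by (auto simp: compat_class_def)
  have y: "0 \<le> y $ i" "i \<noteq> a \<Longrightarrow> ?N $ i $ r1 * y $ a - ?N $ a $ r1 * y $ i = c i" for i
    using \<open>y \<in> _\<close> by (auto simp: compat_class_def)
  have "0 \<le> ?z $ i" for i
    using x y \<open>0 \<le> u\<close> \<open>0 \<le> v\<close> by simp
  moreover have "?N $ i $ r1 * ?z $ a - ?N $ a $ r1 * ?z $ i = c i" if "i \<noteq> a" for i
  proof -
    have "?N $ i $ r1 * ?z $ a - ?N $ a $ r1 * ?z $ i
        = u * (?N $ i $ r1 * x $ a - ?N $ a $ r1 * x $ i)
          + v * (?N $ i $ r1 * y $ a - ?N $ a $ r1 * y $ i)"
      by (simp add: algebra_simps)
    also have "\<dots> = (u + v) * c i"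
      using x(2) y(2) that by (simp add: distrib_right)
    finally show ?thesis
      using \<open>u + v = 1\<close> by simp
  qed
  ultimately show "?z \<in> compat_class alpha beta a r1 c"
    by (simp add: compat_class_def)
qed

lemma stable_steady_states_enclose_zero:
  fixes alpha beta :: "'s::finite \<Rightarrow> 'r::finite \<Rightarrow> nat"
  assumes dim: "dim (stoich_space alpha beta) = 1"
    and pivot: "stoich_matrix alpha beta $ a $ r1 \<noteq> 0"
    and "x \<in> compat_class alpha beta a r1 c" and "y \<in> compat_class alpha beta a r1 c" and "x \<noteq> y"
    and stable: "stable_steady_state alpha beta \<kappa> x" "stable_steady_state alpha beta \<kappa> y"
  obtains r where "0 < r" and "r < 1" and "mass_action alpha beta \<kappa> ((1 - r) *\<^sub>R x + r *\<^sub>R y) = 0"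
proof -
  define d where "d = y - x"
  have "d \<in> stoich_space alpha beta"
    unfolding d_def compat_class_diff_eq_scaled_column[OF assms(3,4) pivot]
    by (intro subspace_scale subspace_stoich_space column_in_stoich_space)
  moreover have "d \<noteq> 0"
    using \<open>x \<noteq> y\<close> by (simp add: d_def)
  ultimately have S: "stoich_space alpha beta = range (\<lambda>t. t *\<^sub>R d)"
    using subspace_eq_line_if_dim_1[OF subspace_stoich_space dim] by blast
  obtain h where field: "\<And>z. mass_action alpha beta \<kappa> z = h z *\<^sub>R d"
    and diff: "\<And>z. h differentiable (at z)"
    using mass_action_along_line[OF S] by blast
  define \<psi> where "\<psi> t = h (x + t *\<^sub>R d)" for t
  have ends: "x + 0 *\<^sub>R d = x" "x + 1 *\<^sub>R d = y"
    by (simp_all add: d_def)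
  have "\<psi> t = 0 \<and> (\<exists>s. (\<psi> has_real_derivative s) (at t) \<and> s < 0)"
    if "stable_steady_state alpha beta \<kappa> (x + t *\<^sub>R d)" for t
  proof
    show "\<psi> t = 0"
      using that field[of "x + t *\<^sub>R d"] \<open>d \<noteq> 0\<close>
      by (simp add: \<psi>_def stable_steady_state_def nondegenerate_def steady_state_def)
    obtain H where H: "(h has_derivative H) (at (x + t *\<^sub>R d))"
      using diff unfolding differentiable_def by blast
    show "\<exists>s. (\<psi> has_real_derivative s) (at t) \<and> s < 0"
      unfolding \<psi>_def
      using has_real_derivative_along_line[OF H]
        stable_imp_derivative_along_line_neg[OF S \<open>d \<noteq> 0\<close> field H that] by blast
  qed
  then obtain s0 s1 where "\<psi> 0 = 0" "(\<psi> has_real_derivative s0) (at 0)" "s0 < 0"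
    and "\<psi> 1 = 0" "(\<psi> has_real_derivative s1) (at 1)" "s1 < 0"
    using stable ends by metis
  moreover have "continuous_on UNIV h"
    by (intro differentiable_imp_continuous_on differentiable_at_imp_differentiable_on diff)
  then have "continuous_on {0..1} \<psi>"
    unfolding \<psi>_def
    by (intro continuous_on_compose2[OF \<open>continuous_on UNIV h\<close>] continuous_intros) auto
  ultimately obtain r where "0 < r" "r < 1" "\<psi> r = 0"
    using zero_between_zeros_with_negative_slopes[of 0 1 \<psi>] by auto
  moreover have "x + r *\<^sub>R d = (1 - r) *\<^sub>R x + r *\<^sub>R y"
    by (simp add: d_def algebra_simps)
  ultimately show thesis
    using that field \<open>d \<noteq> 0\<close> by (simp add: \<psi>_def)
qed

lemma stable_steady_states_enclose_steady_state:
  fixes alpha beta :: "'s::finite \<Rightarrow> 'r::finite \<Rightarrow> nat"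
  assumes "dim (stoich_space alpha beta) = 1"
    and "stoich_matrix alpha beta $ a $ r1 \<noteq> 0"
    and x: "x \<in> compat_class alpha beta a r1 c" "positive_steady_state alpha beta \<kappa> x"
      "stable_steady_state alpha beta \<kappa> x"
    and y: "y \<in> compat_class alpha beta a r1 c" "positive_steady_state alpha beta \<kappa> y"
      "stable_steady_state alpha beta \<kappa> y"
    and "x $ a < y $ a"
  shows "\<exists>z \<in> compat_class alpha beta a r1 c.
           positive_steady_state alpha beta \<kappa> z \<and> x $ a < z $ a \<and> z $ a < y $ a"
proof -
  obtain r where "0 < r" "r < 1" and zero: "mass_action alpha beta \<kappa> ((1 - r) *\<^sub>R x + r *\<^sub>R y) = 0"
    using stable_steady_states_enclose_zero[OF assms(1,2) x(1) y(1) _ x(3) y(3)] \<open>x $ a < y $ a\<close>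
    by auto
  define z where "z = (1 - r) *\<^sub>R x + r *\<^sub>R y"
  show ?thesis
  proof (intro bexI conjI)
    show "z \<in> compat_class alpha beta a r1 c"
      unfolding z_def using convexD[OF convex_compat_class x(1) y(1)] \<open>0 < r\<close> \<open>r < 1\<close> by simp
    have "0 < z $ i" for i
    proof -
      have "0 < x $ i" "0 < y $ i"
        using x(2) y(2) by (simp_all add: positive_steady_state_def)
      with \<open>0 < r\<close> \<open>r < 1\<close> show ?thesis
        unfolding z_def by (auto intro!: add_nonneg_pos mult_pos_pos)
    qed
    then show "positive_steady_state alpha beta \<kappa> z"
      using zero by (simp add: positive_steady_state_def steady_state_def z_def less_imp_le)
    have "0 < r * (y $ a - x $ a)" "0 < (1 - r) * (y $ a - x $ a)"
      using \<open>x $ a < y $ a\<close> \<open>0 < r\<close> \<open>r < 1\<close> by simp_all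
    then show "x $ a < z $ a" "z $ a < y $ a"
      unfolding z_def by (simp_all add: algebra_simps)
  qed
qed

theorem corollary5p6:
  fixes alpha beta :: "'s::finite \<Rightarrow> 'r::finite \<Rightarrow> nat"
    and a :: 's and r1 :: 'r
    and \<kappa> :: "real^'r" and c :: "'s \<Rightarrow> real"
    and n :: nat and xs :: "nat \<Rightarrow> real^'s"
  assumes "valid_network alpha beta"
    and "dim (stoich_space alpha beta) = 1"
    and "stoich_matrix alpha beta $ a $ r1 \<noteq> 0"
    and "\<forall>j. \<kappa>$j > 0"
    and "{x \<in> compat_class alpha beta a r1 c. positive_steady_state alpha beta \<kappa> x} = xs ` {1..n}"
    and "\<forall>i. 1 \<le> i \<and> i < n \<longrightarrow> xs i $ a < xs (Suc i) $ a"
  shows "(\<forall>i. 1 \<le> i \<and> i < n \<longrightarrow>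
            \<not> (stable_steady_state alpha beta \<kappa> (xs i) \<and> stable_steady_state alpha beta \<kappa> (xs (Suc i))))
       \<and> card {i \<in> {1..n}. stable_steady_state alpha beta \<kappa> (xs i)} \<le> nat \<lceil>real n / 2\<rceil>"
proof -
  let ?P = "{x \<in> compat_class alpha beta a r1 c. positive_steady_state alpha beta \<kappa> x}"
  let ?stable = "\<lambda>i. stable_steady_state alpha beta \<kappa> (xs i)"
  have mono: "strict_mono_on {1..n} (\<lambda>i. xs i $ a)"
    using assms(6) by (intro strict_mono_on_atLeastAtMost_if_Suc) auto
  have not_adjacent: "\<not> (?stable i \<and> ?stable (Suc i))" if "1 \<le> i" "i < n" for i
  proof
    assume "?stable i \<and> ?stable (Suc i)"
    moreover have "xs i \<in> ?P" "xs (Suc i) \<in> ?P"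
      using assms(5) that by auto
    moreover have "xs i $ a < xs (Suc i) $ a"
      using assms(6) that by simp
    ultimately obtain z where "z \<in> ?P" "xs i $ a < z $ a" "z $ a < xs (Suc i) $ a"
      using stable_steady_states_enclose_steady_state[OF assms(2,3), where x = "xs i" and y = "xs (Suc i)"]
      by auto
    moreover obtain k where "k \<in> {1..n}" "z = xs k"
      using assms(5) \<open>z \<in> ?P\<close> by blast
    ultimately have "i < k" "k < Suc i"
      using strict_mono_on_less[OF mono] that by auto
    then show False
      by simp
  qed
  then show ?thesis
    by (auto intro!: card_le_ceiling_half_if_no_consecutive)
qed

end
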